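(* Let $K$ be a field and let $r,s\ge 3$ be integers. Let $R$ be a convex $(r+s-2)$-gon with vertices labelled cyclically $1,2,\ldots,r+s-2$. The internal diagonal $\{r-1,r\}$ divides $R$ into two subpolygons: the $r$-gon $P$ with vertices $1,2,\ldots,r$ and the $s$-gon $Q$ with vertices $r-1,r,r+1,\ldots,r+s-2$. Let $D=\{\{r-1,r\}\}$, a dissection of $R$. Let $f:\mathrm{diag}(R)\to K$ be a weak frieze on $R$ with respect to $D$, and suppose $f(r-1,r)\neq 0$. Let $f_P$ and $f_Q$ be the restrictions of $f$ to $\mathrm{diag}(P)$ and $\mathrm{diag}(Q)$ respectively (these are weak friezes with respect to the empty dissection). Let $M_f$, $M_{f_P}$, $M_{f_Q}$ be the associated weak frieze matrices. Then $$\det(M_f) = -f(r-1,r)^{-2}\cdot \det(M_{f_P})\cdot \det(M_{f_Q}).$$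
   Context: For a convex polygon with vertices $1,\ldots,n$ (cyclically ordered), a diagonal is any unordered pair $\{i,j\}$ of distinct vertices (including pairs of neighbouring vertices, i.e. boundary edges); $\mathrm{diag}(P)$ denotes the set of all diagonals. A diagonal $\{i,j\}$ is internal if $i,j$ are not neighbours in the cyclic order. Two diagonals $\{i,j\}$ and $\{k,\ell\}$ cross if in the cyclic order $i<k<j<\ell$ or $i<\ell<j<k$. A dissection is a set of pairwise non-crossing internal diagonals (possibly empty). For a map $f:\mathrm{diag}(P)\to K$ write $f(i,j)=f(\{i,j\})$. Such $f$ is a weak frieze with respect to a dissection $D$ if for every pair of crossing diagonals $\{i,j\},\{k,\ell\}$ at least one of which lies in $D$, the Ptolemy relation $f(i,j)f(k,\ell)=f(i,k)f(j,\ell)+f(i,\ell)f(j,k)$ holds. (With $D=\emptyset$ every map is a weak frieze.) The weak frieze matrix of $f$ on a polygon with vertices $v_1,\ldots,v_m$ is the symmetric $m\times m$ matrix with $(a,b)$-entry $0$ if $a=b$ and $f(v_a,v_b)$ if $a\neq b$ (its determinant does not depend on the chosen ordering of the vertices). *)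

theory Defs
  imports Main "Jordan_Normal_Form.Determinant"
begin

text \<open>A convex polygon is given by the list of its vertex labels in cyclic order
  (distinct labels). Diagonals are two-element sets of vertices.\<close>

definition pos :: "nat list \<Rightarrow> nat \<Rightarrow> nat" where
  "pos vs v = (LEAST k. k < length vs \<and> vs ! k = v)"

definition crosses :: "nat list \<Rightarrow> nat \<Rightarrow> nat \<Rightarrow> nat \<Rightarrow> nat \<Rightarrow> bool" where
  "crosses vs i j k l \<longleftrightarrow>
     (let a = pos vs i; b = pos vs j; c = pos vs k; d = pos vs l in
       (a < c \<and> c < b \<and> b < d) \<or> (a < d \<and> d < b \<and> b < c) \<or>
       (b < c \<and> c < a \<and> a < d) \<or> (b < d \<and> d < a \<and> a < c))"

definition weak_frieze :: "nat list \<Rightarrow> nat set set \<Rightarrow> (nat set \<Rightarrow> 'a::field) \<Rightarrow> bool" where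
  "weak_frieze vs D f \<longleftrightarrow>
     (\<forall>i\<in>set vs. \<forall>j\<in>set vs. \<forall>k\<in>set vs. \<forall>l\<in>set vs.
        crosses vs i j k l \<and> ({i,j} \<in> D \<or> {k,l} \<in> D) \<longrightarrow>
        f {i,j} * f {k,l} = f {i,k} * f {j,l} + f {i,l} * f {j,k})"

definition frieze_matrix :: "nat list \<Rightarrow> (nat set \<Rightarrow> 'a::field) \<Rightarrow> 'a mat" where
  "frieze_matrix vs f = mat (length vs) (length vs)
     (\<lambda>(a,b). if a = b then 0 else f {vs ! a, vs ! b})"

text \<open>The (r+s-2)-gon R obtained by gluing the r-gon P = (1,...,r) and the s-gon
  Q = (r-1,r,...,r+s-2) along the diagonal {r-1,r}; its cyclic order is
  1,...,r-1,r+s-2,...,r+1,r.\<close>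
definition polyR :: "nat \<Rightarrow> nat \<Rightarrow> nat list" where
  "polyR r s = [1..<r] @ rev [r..<r+s-1]"
definition polyP :: "nat \<Rightarrow> nat list" where
  "polyP r = [1..<r+1]"
definition polyQ :: "nat \<Rightarrow> nat \<Rightarrow> nat list" where
  "polyQ r s = [r-1..<r+s-1]"

end

theory Submission
  imports Defs
begin

text \<open>Order the vertices of \<open>R\<close> as \<open>1, \<dots>, r+s-2\<close>, so that \<open>P\<close> occupies the first
  \<open>r\<close> rows and \<open>Q\<close> the last \<open>s\<close> rows of the frieze matrix, overlapping in the two
  pivot rows \<open>r-1, r\<close>. The Ptolemy relations across the diagonal \<open>{r-1, r}\<close> say exactly
  that subtracting suitable multiples of the pivot rows from every other row of \<open>Q\<close> clears
  all columns of \<open>P\<close>. Hence \<open>det M\<^sub>f = det M\<^sub>f\<^sub>P * det Y\<close> for a Schur complement \<open>Y\<close>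
  with respect to the pivot block \<open>[[0, x], [x, 0]]\<close>, \<open>x = f(r-1, r)\<close>. The same elimination
  in \<open>M\<^sub>f\<^sub>Q\<close>, whose leading block is just the pivot block, produces the same \<open>Y\<close> and gives
  \<open>det M\<^sub>f\<^sub>Q = -x\<^sup>2 * det Y\<close>.\<close>

lemma det_permute_rows_cols:
  fixes A :: "'a::comm_ring_1 mat"
  assumes A: "A \<in> carrier_mat n n" and p: "p permutes {0..<n}"
  shows "det (mat n n (\<lambda>(i,j). A $$ (p i, p j))) = det A"
proof -
  define B where "B = mat n n (\<lambda>(i,j). A $$ (p i, j))"
  have B: "B \<in> carrier_mat n n" unfolding B_def by simp
  have p_lt: "p i < n" if "i < n" for i
    using p that by (metis atLeastLessThan_iff permutes_in_image zero_le)
  have "mat n n (\<lambda>(i,j). A $$ (p i, p j)) = transpose_mat (mat n n (\<lambda>(i,j). transpose_mat B $$ (p i, j)))"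
    by (rule eq_matI) (auto simp: B_def p_lt)
  then have "det (mat n n (\<lambda>(i,j). A $$ (p i, p j))) = det (mat n n (\<lambda>(i,j). transpose_mat B $$ (p i, j)))"
    by (simp add: det_transpose[of _ n])
  also have "\<dots> = signof p * det (transpose_mat B)"
    by (rule det_permute_rows[OF _ p]) (use B in simp)
  also have "\<dots> = signof p * (signof p * det A)"
    using det_transpose[OF B] det_permute_rows[OF A p] by (simp add: B_def)
  also have "\<dots> = det A"
    by (simp flip: mult.assoc of_int_mult)
  finally show ?thesis .
qed

lemma det_2x2:
  fixes A :: "'a::comm_ring_1 mat"
  assumes A: "A \<in> carrier_mat 2 2"
  shows "det A = A $$ (0,0) * A $$ (1,1) - A $$ (0,1) * A $$ (1,0)"
proof -
  have "det A = (\<Sum>i<2. A $$ (i,0) * cofactor A i 0)"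
    by (rule laplace_expansion_column[OF A]) simp
  also have "\<dots> = A $$ (0,0) * A $$ (1,1) - A $$ (0,1) * A $$ (1,0)"
    using A by (simp add: numeral_2_eq_2 cofactor_def det_single mat_delete_def)
  finally show ?thesis .
qed

text \<open>Entry \<open>(i, j)\<close> of the Schur complement of the pivot block in rows and columns
  \<open>m, m+1\<close>, when that block is \<open>[[0, x], [x, 0]]\<close> with \<open>x = g m (m+1)\<close>.\<close>

definition schur_entry :: "(nat \<Rightarrow> nat \<Rightarrow> 'a::field) \<Rightarrow> nat \<Rightarrow> nat \<Rightarrow> nat \<Rightarrow> 'a" where
  "schur_entry g m i j = g i j - (g i (Suc m) * g m j + g i m * g (Suc m) j) / g m (Suc m)"

lemma schur_entry_pivot_cols_eq_0:
  fixes g :: "nat \<Rightarrow> nat \<Rightarrow> 'a::field"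
  assumes "g m m = 0" and "g (Suc m) (Suc m) = 0"
    and "g (Suc m) m = g m (Suc m)" and "g m (Suc m) \<noteq> 0"
    and "j < m \<Longrightarrow> g i j * g m (Suc m) = g i (Suc m) * g m j + g i m * g (Suc m) j"
    and "j < m + 2"
  shows "schur_entry g m i j = 0"
proof -
  consider "j < m" | "j = m" | "j = Suc m" using \<open>j < m + 2\<close> by linarith
  then show ?thesis
    by cases (use assms in \<open>simp_all add: schur_entry_def field_simps\<close>)
qed

lemma det_split_hollow_pivot:
  fixes g :: "nat \<Rightarrow> nat \<Rightarrow> 'a::field"
  assumes "g m m = 0" and "g (Suc m) (Suc m) = 0"
    and "g (Suc m) m = g m (Suc m)" and "g m (Suc m) \<noteq> 0"
    and rel: "\<And>i j. m + 2 \<le> i \<Longrightarrow> i < m + 2 + k \<Longrightarrow> j < m \<Longrightarrow>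
      g i j * g m (Suc m) = g i (Suc m) * g m j + g i m * g (Suc m) j"
  shows "det (mat (m+2+k) (m+2+k) (\<lambda>(i,j). g i j)) =
    det (mat (m+2) (m+2) (\<lambda>(i,j). g i j)) * det (mat k k (\<lambda>(i,j). schur_entry g m (m+2+i) (m+2+j)))"
proof -
  define n where "n = m + 2 + k"
  define x where "x = g m (Suc m)"
  define G where "G = mat n n (\<lambda>(i,j). g i j)"
  define A where "A = mat (m+2) (m+2) (\<lambda>(i,j). g i j)"
  define B where "B = mat (m+2) k (\<lambda>(i,j). g i (m+2+j))"
  define Y where "Y = mat k k (\<lambda>(i,j). schur_entry g m (m+2+i) (m+2+j))"
  \<comment> \<open>Subtract from each row \<open>i \<ge> m+2\<close> the multiples of the pivot rows that define \<open>schur_entry\<close>.\<close>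
  define E where "E = mat n n (\<lambda>(i,l). if i = l then 1 else
     if m+2 \<le> i \<and> l = m then - g i (Suc m) / x else
     if m+2 \<le> i \<and> l = Suc m then - g i m / x else (0::'a))"
  have G: "G \<in> carrier_mat n n" and E: "E \<in> carrier_mat n n"
    unfolding G_def E_def by auto
  have det_E: "det E = 1"
  proof -
    have "det E = prod_list (diag_mat E)"
      by (rule det_lower_triangular[OF _ E]) (auto simp: E_def)
    also have "diag_mat E = replicate n 1"
      by (rule nth_equalityI) (auto simp: diag_mat_def E_def)
    finally show ?thesis by simp
  qed
  have EG_entry: "(E * G) $$ (i,j) = (if i < m+2 then g i j else schur_entry g m i j)"
    if ij: "i < n" "j < n" for i j
  proof -
    have "(E * G) $$ (i,j) = (\<Sum>l\<in>{0..<n}. E $$ (i,l) * G $$ (l,j))"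
      using ij E G by (simp add: scalar_prod_def)
    also have "\<dots> = (\<Sum>l\<in>{0..<n}. (if l = i then g i j else 0) +
        ((if l = m \<and> m+2 \<le> i then - g i (Suc m) / x * g m j else 0) +
         (if l = Suc m \<and> m+2 \<le> i then - g i m / x * g (Suc m) j else 0)))"
      using ij by (intro sum.cong) (auto simp: E_def G_def)
    also have "\<dots> = (if i < m+2 then g i j else schur_entry g m i j)"
      using ij unfolding sum.distrib by (auto simp: n_def schur_entry_def x_def diff_divide_distrib add_divide_distrib)
    finally show ?thesis .
  qed
  have "E * G = four_block_mat A B (0\<^sub>m k (m+2)) Y"
  proof (rule eq_matI)
    fix i j
    assume "i < dim_row (four_block_mat A B (0\<^sub>m k (m+2)) Y)"
      and "j < dim_col (four_block_mat A B (0\<^sub>m k (m+2)) Y)"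
    then have ij: "i < n" "j < n" by (auto simp: A_def Y_def n_def)
    have "schur_entry g m i j = 0" if "m + 2 \<le> i" "j < m + 2"
      using schur_entry_pivot_cols_eq_0[OF assms(1-4) rel] ij that by (simp add: n_def)
    moreover have "Suc (Suc (i - 2)) = i" if "m + 2 \<le> i" for i
      using that by simp
    ultimately show "(E * G) $$ (i,j) = four_block_mat A B (0\<^sub>m k (m+2)) Y $$ (i,j)"
      using ij by (auto simp: EG_entry A_def B_def Y_def n_def)
  qed (auto simp: E_def G_def A_def Y_def n_def)
  then have "det (E * G) = det A * det Y"
    by (simp only:) (rule det_four_block_mat_lower_left_zero, auto simp: A_def B_def Y_def)
  moreover have "det (E * G) = det G"
    by (simp add: det_mult[OF E G] det_E)
  ultimately show ?thesis
    by (simp add: G_def A_def Y_def n_def)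
qed

definition frieze_entry :: "(nat set \<Rightarrow> 'a::zero) \<Rightarrow> nat \<Rightarrow> nat \<Rightarrow> 'a" where
  "frieze_entry f u v = (if u = v then 0 else f {u, v})"

lemma frieze_matrix_upt:
  "frieze_matrix [a..<b] f = mat (b - a) (b - a) (\<lambda>(i,j). frieze_entry f (a + i) (a + j))"
  unfolding frieze_matrix_def frieze_entry_def by (rule eq_matI) auto

lemma det_frieze_matrix_mset_eq:
  assumes "mset vs = mset ws"
  shows "det (frieze_matrix vs f) = det (frieze_matrix ws f)"
proof -
  obtain p where p: "p permutes {..<length ws}" and vs: "permute_list p ws = vs"
    using mset_eq_permutation[OF assms] .
  define n where "n = length ws"
  have len: "length ws = n" "length vs = n"
    using mset_eq_length[OF assms] by (simp_all add: n_def)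
  have p_lt: "p i < n" if "i < n" for i
    using p that by (metis lessThan_iff n_def permutes_in_image)
  have p_eq_iff: "p i = p j \<longleftrightarrow> i = j" for i j
    using p by (simp add: permutes_inj inj_eq)
  have vs_nth: "vs ! i = ws ! p i" if "i < n" for i
    using p that by (simp add: len(1) flip: vs permute_list_nth)
  have "frieze_matrix vs f = mat n n (\<lambda>(i,j). frieze_matrix ws f $$ (p i, p j))"
    by (intro eq_matI) (auto simp: frieze_matrix_def len p_lt p_eq_iff vs_nth)
  also have "det \<dots> = det (frieze_matrix ws f)"
    using p by (intro det_permute_rows_cols) (auto simp: frieze_matrix_def n_def atLeast0LessThan)
  finally show ?thesis .
qed

lemma det_frieze_matrix_upt_split:
  fixes f :: "nat set \<Rightarrow> 'a::field"
  assumes "a \<le> p" and "f {p, Suc p} \<noteq> 0"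
    and ptolemy: "\<And>u v. a \<le> u \<Longrightarrow> u < p \<Longrightarrow> p + 2 \<le> v \<Longrightarrow> v < p + 2 + k \<Longrightarrow>
      f {u, v} * f {p, Suc p} = f {u, p} * f {v, Suc p} + f {u, Suc p} * f {v, p}"
  shows "det (frieze_matrix [a..<p+2+k] f) =
    det (frieze_matrix [a..<p+2] f) * det (mat k k (\<lambda>(i,j). schur_entry (frieze_entry f) p (p+2+i) (p+2+j)))"
proof -
  define m where "m = p - a"
  define g where "g i j = frieze_entry f (a + i) (a + j)" for i j
  have p_eq: "a + m = p" using \<open>a \<le> p\<close> by (simp add: m_def)
  have split: "det (mat (m+2+k) (m+2+k) (\<lambda>(i,j). g i j)) =
      det (mat (m+2) (m+2) (\<lambda>(i,j). g i j)) * det (mat k k (\<lambda>(i,j). schur_entry g m (m+2+i) (m+2+j)))"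
  proof (rule det_split_hollow_pivot)
    show "g m m = 0" "g (Suc m) (Suc m) = 0" "g (Suc m) m = g m (Suc m)" "g m (Suc m) \<noteq> 0"
      using assms(2) p_eq by (auto simp: g_def frieze_entry_def insert_commute)
  next
    fix i j assume "m + 2 \<le> i" "i < m + 2 + k" "j < m"
    then have "f {a+j, a+i} * f {p, Suc p} = f {a+j, p} * f {a+i, Suc p} + f {a+j, Suc p} * f {a+i, p}"
      using p_eq by (intro ptolemy) auto
    with \<open>m + 2 \<le> i\<close> \<open>j < m\<close> p_eq show "g i j * g m (Suc m) = g i (Suc m) * g m j + g i m * g (Suc m) j"
      by (auto simp: g_def frieze_entry_def insert_commute mult.commute add.commute)
  qed
  have schur: "schur_entry g m (m+2+i) (m+2+j) = schur_entry (frieze_entry f) p (p+2+i) (p+2+j)" for i j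
    using p_eq by (auto simp: schur_entry_def g_def add_ac)
  have dims: "p + 2 + k - a = m + 2 + k" "p + 2 - a = m + 2"
    using p_eq by simp_all
  show ?thesis
    unfolding frieze_matrix_upt dims using split[unfolded schur] by (simp only: g_def)
qed

lemma pos_nth:
  assumes "distinct vs" and "k < length vs"
  shows "pos vs (vs ! k) = k"
  unfolding pos_def
proof (rule Least_equality)
  show "k < length vs \<and> vs ! k = vs ! k" using assms(2) by simp
next
  fix k' assume "k' < length vs \<and> vs ! k' = vs ! k"
  then show "k \<le> k'" using assms nth_eq_iff_index_eq by fastforce
qed

lemma distinct_polyR: "distinct (polyR r s)"
  by (auto simp: polyR_def)

lemma length_polyR: "length (polyR r s) = (r - 1) + (s - 1)"
  by (simp add: polyR_def)

lemma set_polyR: "1 \<le> r \<Longrightarrow> 1 \<le> s \<Longrightarrow> set (polyR r s) = {1..<r+s-1}"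
  by (auto simp: polyR_def)

lemma pos_polyR_lower:
  assumes "1 \<le> u" and "u < r"
  shows "pos (polyR r s) u = u - 1"
proof -
  have "polyR r s ! (u - 1) = u"
    using assms by (auto simp: polyR_def nth_append)
  with assms show ?thesis
    using pos_nth[OF distinct_polyR, of "u - 1" r s] by (simp add: length_polyR)
qed

lemma pos_polyR_upper:
  assumes "r \<le> v" and "v < r + s - 1"
  shows "pos (polyR r s) v = (r - 1) + (r + s - 2 - v)"
proof -
  have "polyR r s ! ((r - 1) + (r + s - 2 - v)) = v"
    using assms by (auto simp: polyR_def nth_append rev_nth)
  with assms show ?thesis
    using pos_nth[OF distinct_polyR, of "(r - 1) + (r + s - 2 - v)" r s] by (simp add: length_polyR)
qed

lemma crosses_polyR:
  assumes "1 \<le> u" "u < r - 1" "r < v" "v < r + s - 1"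
  shows "crosses (polyR r s) u v (r - 1) r"
proof -
  have "pos (polyR r s) u < pos (polyR r s) (r - 1)"
    and "pos (polyR r s) (r - 1) < pos (polyR r s) v"
    and "pos (polyR r s) v < pos (polyR r s) r"
    using assms by (simp_all add: pos_polyR_lower pos_polyR_upper)
  then show ?thesis
    unfolding crosses_def Let_def by blast
qed

lemma weak_frieze_polyR_ptolemy:
  assumes "weak_frieze (polyR r s) {{r - 1, r}} f"
    and "1 \<le> u" "u < r - 1" "r < v" "v < r + s - 1"
  shows "f {u, v} * f {r - 1, r} = f {u, r - 1} * f {v, r} + f {u, r} * f {v, r - 1}"
proof -
  have "{u, v, r - 1, r} \<subseteq> set (polyR r s)"
    using assms(2-5) by (auto simp: set_polyR)
  then show ?thesis
    using assms crosses_polyR[OF assms(2-5)] unfolding weak_frieze_def by blast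
qed

theorem theorem3p3:
  fixes r s :: nat and f :: "nat set \<Rightarrow> 'a::field"
  assumes "r \<ge> 3" and "s \<ge> 3"
    and "weak_frieze (polyR r s) {{r-1, r}} f"
    and "f {r-1, r} \<noteq> 0"
  shows "det (frieze_matrix (polyR r s) f) =
    - (inverse (f {r-1, r} * f {r-1, r})) * det (frieze_matrix (polyP r) f) * det (frieze_matrix (polyQ r s) f)"
proof -
  define Y where "Y = mat (s - 2) (s - 2)
    (\<lambda>(i,j). schur_entry (frieze_entry f) (r - 1) (r - 1 + 2 + i) (r - 1 + 2 + j))"
  have r: "Suc (r - 1) = r" "r - 1 + 2 = r + 1" "r - 1 + 2 + (s - 2) = r + s - 1"
    using assms(1,2) by simp_all
  have pivot: "f {r - 1, Suc (r - 1)} \<noteq> 0"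
    using assms(4) r by simp
  have "det (frieze_matrix (polyR r s) f) = det (frieze_matrix [1..<r - 1 + 2 + (s - 2)] f)"
    unfolding r(3) using assms(1,2)
    by (intro det_frieze_matrix_mset_eq, subst set_eq_iff_mset_eq_distinct[symmetric])
      (simp_all add: distinct_polyR set_polyR del: upt_Suc)
  also have "\<dots> = det (frieze_matrix [1..<r - 1 + 2] f) * det Y"
    unfolding Y_def
  proof (rule det_frieze_matrix_upt_split[where a = 1 and p = "r - 1" and f = f, OF _ pivot])
    fix u v assume "1 \<le> u" "u < r - 1" "r - 1 + 2 \<le> v" "v < r - 1 + 2 + (s - 2)"
    then show "f {u, v} * f {r - 1, Suc (r - 1)} =
      f {u, r - 1} * f {v, Suc (r - 1)} + f {u, Suc (r - 1)} * f {v, r - 1}"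
      using weak_frieze_polyR_ptolemy[OF assms(3)] r by simp
  qed (use assms(1) in simp)
  also have "[1..<r - 1 + 2] = polyP r"
    unfolding polyP_def r(2) ..
  finally have R: "det (frieze_matrix (polyR r s) f) = det (frieze_matrix (polyP r) f) * det Y" .
  \<comment> \<open>For \<open>Q\<close> the pivot rows come first, so the Ptolemy hypothesis is vacuous.\<close>
  have Q: "det (frieze_matrix (polyQ r s) f) = det (frieze_matrix [r - 1..<r - 1 + 2] f) * det Y"
    unfolding Y_def polyQ_def r(3)[symmetric]
    by (rule det_frieze_matrix_upt_split[where f = f, OF _ pivot]) simp_all
  have "det (frieze_matrix [r - 1..<r - 1 + 2] f) = - (f {r - 1, r} * f {r - 1, r})"
    unfolding frieze_matrix_upt using r(1) by (simp add: det_2x2 frieze_entry_def insert_commute)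
  with R Q assms(4) show ?thesis
    by (simp add: field_simps)
qed

end
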